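(* Suppose the DGF selection rule is run indefinitely (stopping rule ignored). Then for each $m=1,\dots,M$ there exist $C>0$ and $\gamma>0$ such that $\mathbf P_m(\tau_1>n)\le Ce^{-\gamma n}$ for all $n\ge1$.
   Context: Model. Fix integers $M\ge2$, $1\le K\le M$. There are $M$ cells, exactly one containing a target; $H_m$: the target is in cell $m$. $f,g$ are probability densities w.r.t. a common measure with $0<D(g\|f),D(f\|g)<\infty$ ($D(p\|q)=\int p\log(p/q)$), and $\log(g(Y)/f(Y))$ has finite moment generating function near $0$ for $Y\sim f$ and $Y\sim g$. At each time $n$ a set of $K$ distinct cells is selected and an observation $y_k(n)$ is obtained from each selected cell; under $H_m$ observations are independent, law $g$ from cell $m$ and $f$ otherwise. $\mathbf P_m$: probability under $H_m$. Notation. $\ell_k(n)=\log\frac{g(y_k(n))}{f(y_k(n))}$, $\mathbf1_k(n)$ indicates cell $k$ is observed at time $n$, $S_k(n)=\sum_{t\le n}\ell_k(t)\mathbf1_k(t)$, $m^{(i)}(n)$ the cell with $i$-th largest $S_k(n)$ (ties arbitrary). DGF selection rule: at each time (ranking by current sums) select $m^{(1)},\dots,m^{(K)}$ if $D(g\|f)\ge D(f\|g)/(M-1)$ or $K=M$, and $m^{(2)},\dots,m^{(K+1)}$ if $D(g\|f)<D(f\|g)/(M-1)$ and $K<M$. "Run indefinitely" means this rule is applied at every time $n=1,2,\dots$ without stopping. Under $H_m$, $\tau_1$ is the smallest integer such that $S_m(n)>S_j(n)$ for all $j\ne m$ and all $n\ge\tau_1$. *)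

theory Defs
  imports "HOL-Probability.Probability"
begin

definition KL :: "'a measure \<Rightarrow> ('a \<Rightarrow> real) \<Rightarrow> ('a \<Rightarrow> real) \<Rightarrow> real" where
  "KL \<mu> p q = (\<integral>x. p x * ln (p x / q x) \<partial>\<mu>)"

definition llr :: "('a \<Rightarrow> real) \<Rightarrow> ('a \<Rightarrow> real) \<Rightarrow> 'a \<Rightarrow> real" where
  "llr f g y = ln (g y / f y)"

text \<open>S_k(n) = sum over t = 1..n of l_k(t) 1_k(t); Y k t is the observation of cell k at time t,
  sel t is the set of cells observed at time t.\<close>
definition cumS :: "('a \<Rightarrow> real) \<Rightarrow> (nat \<Rightarrow> nat \<Rightarrow> 'w \<Rightarrow> 'a) \<Rightarrow> (nat \<Rightarrow> 'w \<Rightarrow> nat set)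
    \<Rightarrow> nat \<Rightarrow> nat \<Rightarrow> 'w \<Rightarrow> real" where
  "cumS lr Y sel k n \<omega> = (\<Sum>t\<in>{1..n}. if k \<in> sel t \<omega> then lr (Y k t \<omega>) else 0)"

definition topK :: "nat \<Rightarrow> nat set \<Rightarrow> (nat \<Rightarrow> real) \<Rightarrow> nat set \<Rightarrow> bool" where
  "topK K C s A \<longleftrightarrow> A \<subseteq> C \<and> card A = K \<and> (\<forall>a\<in>A. \<forall>b\<in>C - A. s b \<le> s a)"

definition ranks2K :: "nat \<Rightarrow> nat set \<Rightarrow> (nat \<Rightarrow> real) \<Rightarrow> nat set \<Rightarrow> bool" where
  "ranks2K K C s A \<longleftrightarrow> (\<exists>c\<in>C. (\<forall>b\<in>C. s b \<le> s c) \<and> topK K (C - {c}) s A)"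

text \<open>DGF selection rule given current sums s; Dgf = D(g||f), Dfg = D(f||g).\<close>
definition dgf_rule :: "nat \<Rightarrow> nat \<Rightarrow> real \<Rightarrow> real \<Rightarrow> (nat \<Rightarrow> real) \<Rightarrow> nat set \<Rightarrow> bool" where
  "dgf_rule M K Dgf Dfg s A =
     (if Dgf \<ge> Dfg / (real M - 1) \<or> K = M then topK K {1..M} s A else ranks2K K {1..M} s A)"

definition tau1 :: "nat \<Rightarrow> nat \<Rightarrow> (nat \<Rightarrow> nat \<Rightarrow> real) \<Rightarrow> enat" where
  "tau1 M m S = (if \<exists>t. \<forall>n\<ge>t. \<forall>j\<in>{1..M} - {m}. S j n < S m n
      then enat (LEAST t. \<forall>n\<ge>t. \<forall>j\<in>{1..M} - {m}. S j n < S m n) else \<infinity>)"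

definition past_sigma :: "'w measure \<Rightarrow> 'a measure \<Rightarrow> (nat \<Rightarrow> nat \<Rightarrow> 'w \<Rightarrow> 'a) \<Rightarrow> nat \<Rightarrow> nat \<Rightarrow> 'w set set" where
  "past_sigma P \<mu> Y M n = sigma_sets (space P)
     {Y k t -` B \<inter> space P | k t B. k \<in> {1..M} \<and> 1 \<le> t \<and> t < n \<and> B \<in> sets \<mu>}"

end

theory Submission
  imports Defs
begin

text \<open>
  Call a nonempty set \<open>T\<close> of cells other than \<open>m\<close> a rival set and, for a small \<open>\<theta> > 0\<close>,
  consider the potential \<open>\<Phi>(n) = \<Sum>\<^sub>T exp (\<theta> \<Sum>\<^sub>j\<^sub>\<in>\<^sub>T (S\<^sub>j(n) - S\<^sub>m(n)))\<close> over all rival sets.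
  (1) Since both KL divergences are positive and the log-likelihood ratio \<open>\<ell>\<close> has a finite
      moment generating function near 0, \<open>E\<^sub>f exp (s \<ell>)\<close> and \<open>E\<^sub>g exp (-s \<ell>)\<close> are bounded by
      one \<open>\<lambda> < 1\<close> for all \<open>s \<in> [\<theta>, M\<^sup>2\<theta>]\<close>.
  (2) By independence of new observations from the past and convexity of \<open>exp\<close>, a summand
      of \<open>\<Phi>\<close> one of whose cells (or \<open>m\<close>) is observed shrinks in mean by the factor \<open>\<lambda>\<close>.
  (3) The DGF rule always observes a rival set whose summand dominates every unobserved one;
      hence \<open>E \<Phi>(n+1) \<le> \<rho> E \<Phi>(n)\<close> with \<open>\<rho> = (\<lambda>+N)/(1+N) < 1\<close>, \<open>N\<close> the number of rival
      sets, and \<open>E \<Phi>(n) \<le> N \<rho>\<^sup>n\<close>.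
  (4) If \<open>\<tau>\<^sub>1 > n\<close>, then \<open>\<Phi>(n') \<ge> 1\<close> for some \<open>n' \<ge> n\<close>; Markov's inequality and a union
      bound give \<open>P(\<tau>\<^sub>1 > n) \<le> N \<rho>\<^sup>n / (1 - \<rho>)\<close>.
\<close>

section \<open>Exponential moments near zero\<close>

lemma exp_le_quadratic: "exp (y::real) \<le> 1 + y + y\<^sup>2 * exp \<bar>y\<bar>"
proof -
  obtain t where t: "\<bar>t\<bar> \<le> \<bar>y\<bar>" "exp y = (\<Sum>m<2. (y ^ m) / fact m) + (exp t / fact 2) * y ^ 2"
    using Maclaurin_exp_le[of y 2] by blast
  have "exp t * y\<^sup>2 \<le> exp \<bar>y\<bar> * y\<^sup>2"
    using t(1) by (intro mult_right_mono) auto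
  moreover have "0 \<le> exp \<bar>y\<bar> * y\<^sup>2" by simp
  moreover have "(exp t / fact 2) * y ^ 2 = (exp t * y\<^sup>2) / 2" by (simp add: eval_nat_numeral)
  moreover have "y\<^sup>2 * exp \<bar>y\<bar> = exp \<bar>y\<bar> * y\<^sup>2" by simp
  ultimately have "(exp t / fact 2) * y ^ 2 \<le> y\<^sup>2 * exp \<bar>y\<bar>" by linarith
  moreover have "(\<Sum>m<2. (y ^ m) / fact m) = 1 + y" by (simp add: eval_nat_numeral)
  ultimately show ?thesis using t(2) by linarith
qed

lemma square_le_exp_abs: "(x::real)\<^sup>2 \<le> 2 * exp \<bar>x\<bar>"
  using exp_lower_Taylor_quadratic[of "\<bar>x\<bar>"] by simp

text \<open>For \<open>0 < s \<le> a/2\<close>, \<open>exp (s x)\<close> is at most linear in \<open>x\<close> plus \<open>s\<^sup>2\<close> times a function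
  of \<open>x\<close> that is integrable as soon as \<open>exp (\<plusminus>a x)\<close> is.\<close>
lemma exp_scaled_le_quadratic:
  fixes a s x :: real
  assumes a: "a > 0" and s: "0 < s" "s \<le> a/2"
  shows "exp (s * x) \<le> 1 + s * x + s\<^sup>2 * ((8 / a\<^sup>2) * (exp (a * x) + exp (- a * x)))"
proof -
  have "x\<^sup>2 = (4/a\<^sup>2) * (a*x/2)\<^sup>2" using a by (simp add: power2_eq_square field_simps)
  also have "\<dots> \<le> (4/a\<^sup>2) * (2 * exp \<bar>a*x/2\<bar>)"
    using square_le_exp_abs[of "a*x/2"] a by (intro mult_left_mono) auto
  finally have x2: "x\<^sup>2 \<le> (8/a\<^sup>2) * exp (a*\<bar>x\<bar>/2)" using a by (simp add: abs_mult)
  have "2 * s * \<bar>x\<bar> \<le> a * \<bar>x\<bar>" using s by (intro mult_right_mono) auto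
  hence ex: "exp \<bar>s*x\<bar> \<le> exp (a*\<bar>x\<bar>/2)" using s by (simp add: abs_mult)
  have "x\<^sup>2 * exp \<bar>s*x\<bar> \<le> (8/a\<^sup>2) * exp (a*\<bar>x\<bar>/2) * exp (a*\<bar>x\<bar>/2)"
    using x2 ex by (intro mult_mono) auto
  also have "\<dots> = (8/a\<^sup>2) * exp (a*\<bar>x\<bar>)" by (simp add: mult.assoc flip: exp_add)
  also have "\<dots> \<le> (8/a\<^sup>2) * (exp (a * x) + exp (- a * x))"
    using a by (intro mult_left_mono) (cases "x \<ge> 0"; simp)+
  finally have "s\<^sup>2 * (x\<^sup>2 * exp \<bar>s*x\<bar>) \<le> s\<^sup>2 * ((8/a\<^sup>2) * (exp (a * x) + exp (- a * x)))"
    by (intro mult_left_mono) auto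
  moreover have "exp (s*x) \<le> 1 + s*x + s\<^sup>2 * (x\<^sup>2 * exp \<bar>s*x\<bar>)"
    using exp_le_quadratic[of "s*x"] by (simp add: power_mult_distrib mult.assoc)
  ultimately show ?thesis by linarith
qed

lemma mgf_below_one:
  fixes X :: "'a \<Rightarrow> real" and \<delta> :: real
  assumes Q: "prob_space Q" and Xm[measurable]: "X \<in> borel_measurable Q" and Xi: "integrable Q X"
    and neg: "(\<integral>x. X x \<partial>Q) < 0" and d: "\<delta> > 0"
    and mgf: "\<forall>t. \<bar>t\<bar> < \<delta> \<longrightarrow> integrable Q (\<lambda>x. exp (t * X x))"
  shows "\<exists>s0>0. \<exists>c>0. \<forall>s. 0 < s \<and> s \<le> s0 \<longrightarrow>
            integrable Q (\<lambda>x. exp (s * X x)) \<and> (\<integral>x. exp (s * X x) \<partial>Q) \<le> 1 - c * s"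
proof -
  interpret prob_space Q by (rule Q)
  define a where "a = \<delta>/2"
  have a: "a > 0" "a < \<delta>" using d by (auto simp: a_def)
  define B where "B x = (8 / a\<^sup>2) * (exp (a * X x) + exp (- a * X x))" for x
  have iB: "integrable Q B" unfolding B_def
    using mgf[rule_format, of a] mgf[rule_format, of "-a"] a
    by (intro integrable_mult_right integrable_add) auto
  define D where "D = - (\<integral>x. X x \<partial>Q)"
  have D: "D > 0" using neg by (simp add: D_def)
  define K where "K = (\<integral>x. B x \<partial>Q) + 1"
  have "(\<integral>x. B x \<partial>Q) \<ge> 0" unfolding B_def by (intro integral_nonneg_AE) auto
  hence K: "K > 0" by (simp add: K_def)
  define s0 where "s0 = min (a/2) (D / (2*K))"
  have bound: "integrable Q (\<lambda>x. exp (s * X x)) \<and> (\<integral>x. exp (s * X x) \<partial>Q) \<le> 1 - D/2 * s"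
    if s: "0 < s" "s \<le> s0" for s
  proof
    have sa: "s \<le> a/2" "s * K \<le> D/2" using s K by (auto simp: s0_def field_simps)
    show ie: "integrable Q (\<lambda>x. exp (s * X x))" using mgf s sa a by auto
    have "integrable Q (\<lambda>x. 1 + s * X x + s\<^sup>2 * B x)"
      using Xi iB by (intro Bochner_Integration.integrable_add integrable_mult_right) auto
    then have "(\<integral>x. exp (s * X x) \<partial>Q) \<le> (\<integral>x. 1 + s * X x + s\<^sup>2 * B x \<partial>Q)"
      using ie exp_scaled_le_quadratic[OF a(1) s(1) sa(1)] unfolding B_def
      by (intro integral_mono) auto
    also have "\<dots> = 1 - s * D + s * (s * (K - 1))"
      using Xi iB by (simp add: D_def K_def prob_space power2_eq_square)
    also have "\<dots> \<le> 1 - s * D + s * (D/2)"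
      using s sa by (intro add_left_mono mult_left_mono) (auto simp: algebra_simps)
    finally show "(\<integral>x. exp (s * X x) \<partial>Q) \<le> 1 - D/2 * s" by (simp add: algebra_simps)
  qed
  have "s0 > 0" using a D K by (simp add: s0_def)
  then show ?thesis using D bound by (intro exI[of _ s0] conjI exI[of _ "D/2"]) auto
qed

lemma density_mgf_below_one:
  fixes p X :: "'a \<Rightarrow> real"
  assumes [measurable]: "p \<in> borel_measurable \<mu>" "X \<in> borel_measurable \<mu>"
    and p_nonneg: "\<forall>x\<in>space \<mu>. 0 \<le> p x"
    and prob: "prob_space (density \<mu> (\<lambda>x. ennreal (p x)))"
    and int: "integrable \<mu> (\<lambda>x. p x * X x)" and neg: "(\<integral>x. p x * X x \<partial>\<mu>) < 0"
    and mgf: "\<exists>\<delta>>0. \<forall>t::real. \<bar>t\<bar> < \<delta> \<longrightarrow>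
                integrable (density \<mu> (\<lambda>x. ennreal (p x))) (\<lambda>x. exp (t * X x))"
  shows "\<exists>s0>0. \<exists>c>0. \<forall>s. 0 < s \<and> s \<le> s0 \<longrightarrow>
      integrable (density \<mu> (\<lambda>x. ennreal (p x))) (\<lambda>x. exp (s * X x)) \<and>
      (\<integral>x. exp (s * X x) \<partial>density \<mu> (\<lambda>x. ennreal (p x))) \<le> 1 - c * s"
proof -
  have AE: "AE x in \<mu>. 0 \<le> p x" using p_nonneg by (auto intro: AE_I2)
  have "integrable (density \<mu> (\<lambda>x. ennreal (p x))) X"
    using integrable_density[of X \<mu> p] AE int by simp
  moreover have "(\<integral>x. X x \<partial>density \<mu> (\<lambda>x. ennreal (p x))) < 0"
    using integral_density[of X \<mu> p] AE neg by simp
  moreover obtain \<delta> where "\<delta> > 0" "\<forall>t::real. \<bar>t\<bar> < \<delta> \<longrightarrow>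
      integrable (density \<mu> (\<lambda>x. ennreal (p x))) (\<lambda>x. exp (t * X x))"
    using mgf by blast
  ultimately show ?thesis by (intro mgf_below_one[OF prob]) auto
qed

lemma common_contraction:
  fixes X1 :: "'a \<Rightarrow> real" and X2 :: "'b \<Rightarrow> real" and R :: real
  assumes R: "1 \<le> R"
    and c1: "\<exists>s0>0. \<exists>c>0. \<forall>s. 0 < s \<and> s \<le> s0 \<longrightarrow>
               integrable Q1 (\<lambda>x. exp (s * X1 x)) \<and> (\<integral>x. exp (s * X1 x) \<partial>Q1) \<le> 1 - c * s"
    and c2: "\<exists>s0>0. \<exists>c>0. \<forall>s. 0 < s \<and> s \<le> s0 \<longrightarrow>
               integrable Q2 (\<lambda>x. exp (s * X2 x)) \<and> (\<integral>x. exp (s * X2 x) \<partial>Q2) \<le> 1 - c * s"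
  shows "\<exists>\<theta>>0. \<exists>lam. 0 \<le> lam \<and> lam < 1 \<and> (\<forall>s. \<theta> \<le> s \<and> s \<le> R * \<theta> \<longrightarrow>
           (\<integral>\<^sup>+x. ennreal (exp (s * X1 x)) \<partial>Q1) \<le> ennreal lam \<and>
           (\<integral>\<^sup>+x. ennreal (exp (s * X2 x)) \<partial>Q2) \<le> ennreal lam)"
proof -
  obtain s1 c1 where s1: "s1 > 0" "c1 > 0" and b1: "\<forall>s. 0 < s \<and> s \<le> s1 \<longrightarrow>
      integrable Q1 (\<lambda>x. exp (s * X1 x)) \<and> (\<integral>x. exp (s * X1 x) \<partial>Q1) \<le> 1 - c1 * s"
    using c1 by blast
  obtain s2 c2 where s2: "s2 > 0" "c2 > 0" and b2: "\<forall>s. 0 < s \<and> s \<le> s2 \<longrightarrow>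
      integrable Q2 (\<lambda>x. exp (s * X2 x)) \<and> (\<integral>x. exp (s * X2 x) \<partial>Q2) \<le> 1 - c2 * s"
    using c2 by blast
  define \<theta> where "\<theta> = min s1 s2 / R"
  define lam where "lam = 1 - min c1 c2 * \<theta>"
  have th: "0 < \<theta>" "R * \<theta> \<le> s1" "R * \<theta> \<le> s2" using s1 s2 R by (auto simp: \<theta>_def)
  have slope: "1 - c * s \<le> lam" if "\<theta> \<le> s" "c = c1 \<or> c = c2" for c s
  proof -
    have "min c1 c2 * \<theta> \<le> c * s" using that th s1 s2 by (intro mult_mono) auto
    then show ?thesis unfolding lam_def by linarith
  qed
  have nn_bound: "(\<integral>\<^sup>+x. ennreal (exp (s * X x)) \<partial>Q) \<le> ennreal lam"
    if "integrable Q (\<lambda>x. exp (s * X x))" "(\<integral>x. exp (s * X x) \<partial>Q) \<le> lam"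
    for Q and X :: "'c \<Rightarrow> real" and s
    using that by (subst nn_integral_eq_integral) (auto intro: ennreal_leI)
  have "\<theta> \<le> s1" using R th by (smt (verit) mult_le_cancel_right1)
  then have "(\<integral>x. exp (\<theta> * X1 x) \<partial>Q1) \<le> 1 - c1 * \<theta>" using b1 th by blast
  moreover have "0 \<le> (\<integral>x. exp (\<theta> * X1 x) \<partial>Q1)" by (intro integral_nonneg_AE) auto
  ultimately have "0 \<le> lam" using slope[of \<theta> c1] by linarith
  moreover have "lam < 1" using th s1 s2 by (simp add: lam_def)
  moreover have "(\<integral>\<^sup>+x. ennreal (exp (s * X1 x)) \<partial>Q1) \<le> ennreal lam \<and>
           (\<integral>\<^sup>+x. ennreal (exp (s * X2 x)) \<partial>Q2) \<le> ennreal lam" if "\<theta> \<le> s" "s \<le> R * \<theta>" for s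
  proof -
    have s: "0 < s" "s \<le> s1" "s \<le> s2" using that th by auto
    have "1 - c1 * s \<le> lam" "1 - c2 * s \<le> lam" using slope that by auto
    then show ?thesis using b1[rule_format, of s] b2[rule_format, of s] s
      by (intro conjI nn_bound) auto
  qed
  ultimately show ?thesis using th(1) by blast
qed

text \<open>Step (1) for the log-likelihood ratio \<open>\<ell> = ln (g/f)\<close>: under \<open>f\<close> its mean is
  \<open>-D(f\<parallel>g)\<close>, under \<open>g\<close> the mean of \<open>-\<ell>\<close> is \<open>-D(g\<parallel>f)\<close>; both are negative.\<close>
lemma llr_common_contraction:
  fixes f g :: "'a \<Rightarrow> real" and R :: real
  assumes [measurable]: "f \<in> borel_measurable \<mu>" "g \<in> borel_measurable \<mu>"
    and "\<forall>x\<in>space \<mu>. 0 \<le> f x" and "\<forall>x\<in>space \<mu>. 0 \<le> g x"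
    and "prob_space (density \<mu> (\<lambda>x. ennreal (f x)))"
    and "prob_space (density \<mu> (\<lambda>x. ennreal (g x)))"
    and igf: "integrable \<mu> (\<lambda>x. g x * ln (g x / f x))"
    and ifg: "integrable \<mu> (\<lambda>x. f x * ln (f x / g x))"
    and "0 < KL \<mu> g f" and "0 < KL \<mu> f g"
    and mgf: "\<exists>\<delta>>0. \<forall>t::real. \<bar>t\<bar> < \<delta> \<longrightarrow>
           integrable (density \<mu> (\<lambda>x. ennreal (f x))) (\<lambda>y. exp (t * llr f g y)) \<and>
           integrable (density \<mu> (\<lambda>x. ennreal (g x))) (\<lambda>y. exp (t * llr f g y))"
    and "1 \<le> R"
  shows "\<exists>\<theta>>0. \<exists>lam. 0 \<le> lam \<and> lam < 1 \<and> (\<forall>s. \<theta> \<le> s \<and> s \<le> R * \<theta> \<longrightarrow>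
           (\<integral>\<^sup>+x. ennreal (exp (s * llr f g x)) \<partial>density \<mu> (\<lambda>x. ennreal (f x))) \<le> ennreal lam \<and>
           (\<integral>\<^sup>+x. ennreal (exp (s * - llr f g x)) \<partial>density \<mu> (\<lambda>x. ennreal (g x))) \<le> ennreal lam)"
proof (rule common_contraction)
  have [measurable]: "llr f g \<in> borel_measurable \<mu>" unfolding llr_def by measurable
  have eq_f: "(\<lambda>x. f x * llr f g x) = (\<lambda>x. - (f x * ln (f x / g x)))"
    by (rule ext) (simp add: llr_def ln_div right_diff_distrib)
  have eq_g: "(\<lambda>x. g x * - llr f g x) = (\<lambda>x. - (g x * ln (g x / f x)))"
    by (simp add: llr_def)
  have int_f: "integrable \<mu> (\<lambda>x. f x * llr f g x)" unfolding eq_f using ifg by simp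
  have int_g: "integrable \<mu> (\<lambda>x. g x * - llr f g x)" unfolding eq_g using igf by simp
  have mean_f: "(\<integral>x. f x * llr f g x \<partial>\<mu>) < 0"
    using \<open>0 < KL \<mu> f g\<close> unfolding eq_f KL_def by simp
  have mean_g: "(\<integral>x. g x * - llr f g x \<partial>\<mu>) < 0"
    using \<open>0 < KL \<mu> g f\<close> unfolding eq_g KL_def by simp
  obtain \<delta> where "\<delta> > 0" and d: "\<forall>t::real. \<bar>t\<bar> < \<delta> \<longrightarrow>
           integrable (density \<mu> (\<lambda>x. ennreal (f x))) (\<lambda>y. exp (t * llr f g y)) \<and>
           integrable (density \<mu> (\<lambda>x. ennreal (g x))) (\<lambda>y. exp (t * llr f g y))"
    using mgf by blast
  have d_g: "integrable (density \<mu> (\<lambda>x. ennreal (g x))) (\<lambda>y. exp (t * - llr f g y))"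
    if "\<bar>t\<bar> < \<delta>" for t
    using d[rule_format, of "- t"] that by simp
  show "\<exists>s0>0. \<exists>c>0. \<forall>s. 0 < s \<and> s \<le> s0 \<longrightarrow>
      integrable (density \<mu> (\<lambda>x. ennreal (f x))) (\<lambda>x. exp (s * llr f g x)) \<and>
      (\<integral>x. exp (s * llr f g x) \<partial>density \<mu> (\<lambda>x. ennreal (f x))) \<le> 1 - c * s"
    using \<open>\<delta> > 0\<close> d
    by (intro density_mgf_below_one[OF _ _ assms(3,5) int_f mean_f]) auto
  show "\<exists>s0>0. \<exists>c>0. \<forall>s. 0 < s \<and> s \<le> s0 \<longrightarrow>
      integrable (density \<mu> (\<lambda>x. ennreal (g x))) (\<lambda>x. exp (s * - llr f g x)) \<and>
      (\<integral>x. exp (s * - llr f g x) \<partial>density \<mu> (\<lambda>x. ennreal (g x))) \<le> 1 - c * s"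
    using \<open>\<delta> > 0\<close> d_g
    by (intro density_mgf_below_one[OF _ _ assms(4,6) int_g mean_g]) auto
qed fact

lemma exp_sum_le_mean:
  fixes x :: "'i \<Rightarrow> real"
  assumes "finite J" "J \<noteq> {}"
  shows "exp (\<Sum>i\<in>J. x i) \<le> (\<Sum>i\<in>J. (1 / real (card J)) * exp (real (card J) * x i))"
proof -
  have cJ: "real (card J) > 0" using assms by (simp add: card_gt_0_iff)
  have "exp (\<Sum>i\<in>J. x i) = exp (\<Sum>i\<in>J. (1 / real (card J)) *\<^sub>R (real (card J) * x i))"
    using cJ by simp
  also have "\<dots> \<le> (\<Sum>i\<in>J. (1 / real (card J)) * exp (real (card J) * x i))"
    using assms cJ by (intro convex_on_sum[where C=UNIV] exp_convex) auto
  finally show ?thesis .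
qed

section \<open>Combinatorics of the DGF selection rule\<close>

lemma dgf_rule_subset: "dgf_rule M K a b s A \<Longrightarrow> A \<subseteq> {1..M}"
  unfolding dgf_rule_def ranks2K_def topK_def by (auto split: if_splits)

lemma exchange_into_selection:
  fixes s :: "nat \<Rightarrow> real"
  assumes T: "T \<subseteq> {1..M} - {m}" and b: "b \<in> T" and TA: "T \<inter> A = {}"
    and a: "a \<in> A" "a \<in> {1..M}" "a \<noteq> m" and ab: "s b \<le> s a"
  shows "\<exists>T'. T' \<subseteq> {1..M} - {m} \<and> T' \<noteq> {} \<and> T' \<inter> A \<noteq> {} \<and>
           (\<Sum>j\<in>T. s j - s m) \<le> (\<Sum>j\<in>T'. s j - s m)"
proof (intro exI conjI)
  have fin: "finite T" using T finite_subset by blast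
  have aT: "a \<notin> T" using a TA by blast
  have "(\<Sum>j\<in>T. s j - s m) = (s b - s m) + (\<Sum>j\<in>T - {b}. s j - s m)"
    using fin b by (simp add: sum.remove)
  also have "\<dots> \<le> (s a - s m) + (\<Sum>j\<in>T - {b}. s j - s m)" using ab by simp
  also have "\<dots> = (\<Sum>j\<in>insert a (T - {b}). s j - s m)" using fin aT by simp
  finally show "(\<Sum>j\<in>T. s j - s m) \<le> (\<Sum>j\<in>insert a (T - {b}). s j - s m)" .
qed (use T a in auto)

text \<open>For the top-\<open>K\<close> variant exchange any member of \<open>T\<close>; for the
  ranks-2-to-(\<open>K+1\<close>) variant the only problematic case is \<open>T = {c}\<close> with \<open>c\<close> the unselected
  leader, and then \<open>{c, a}\<close> works for any selected \<open>a\<close>, which outscores \<open>m\<close>.\<close>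
lemma dgf_rule_dominates:
  fixes s :: "nat \<Rightarrow> real"
  assumes rule: "dgf_rule M K a0 b0 s A" and K: "1 \<le> K" and m: "m \<in> {1..M}" and mA: "m \<notin> A"
    and T: "T \<subseteq> {1..M} - {m}" "T \<noteq> {}" "T \<inter> A = {}"
  shows "\<exists>T'. T' \<subseteq> {1..M} - {m} \<and> T' \<noteq> {} \<and> T' \<inter> A \<noteq> {} \<and>
           (\<Sum>j\<in>T. s j - s m) \<le> (\<Sum>j\<in>T'. s j - s m)"
proof (cases "topK K {1..M} s A")
  case True
  then have A: "A \<subseteq> {1..M}" "card A = K" "\<forall>a\<in>A. \<forall>b\<in>{1..M} - A. s b \<le> s a"
    unfolding topK_def by auto
  obtain a where a: "a \<in> A" using A(2) K by fastforce
  obtain b where b: "b \<in> T" using T by blast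
  have "s b \<le> s a" using A(3) a b T by blast
  then show ?thesis using exchange_into_selection[OF T(1) b T(3) a] A(1) a mA by blast
next
  case False
  then have "ranks2K K {1..M} s A" using rule by (auto simp: dgf_rule_def split: if_splits)
  then obtain c where c: "c \<in> {1..M}" "\<forall>b\<in>{1..M}. s b \<le> s c"
    and A: "A \<subseteq> {1..M} - {c}" "card A = K" "\<forall>a\<in>A. \<forall>b\<in>({1..M} - {c}) - A. s b \<le> s a"
    unfolding ranks2K_def topK_def by blast
  obtain a where a: "a \<in> A" using A(2) K by fastforce
  have a': "a \<in> {1..M}" "a \<noteq> m" "a \<noteq> c" using A(1) a mA by auto
  show ?thesis
  proof (cases "\<exists>b\<in>T. b \<noteq> c")
    case True
    then obtain b where b: "b \<in> T" "b \<noteq> c" by blast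
    have "s b \<le> s a" using A(3) a b T by blast
    then show ?thesis using exchange_into_selection[OF T(1) b(1) T(3) a a'(1,2)] by blast
  next
    case False
    then have Tc: "T = {c}" using T by auto
    then have "s m \<le> s a" using A(3) a m mA T(1) by blast
    then have "(\<Sum>j\<in>T. s j - s m) \<le> (\<Sum>j\<in>{c, a}. s j - s m)" using Tc a' by simp
    moreover have "{c, a} \<subseteq> {1..M} - {m}" "{c, a} \<inter> A \<noteq> {}" using Tc T(1) a a' by auto
    ultimately show ?thesis by blast
  qed
qed

lemma damped_sum_le:
  fixes tf :: "'t \<Rightarrow> real" and lam :: real
  assumes fin: "finite TT" and pos: "\<forall>T\<in>TT. 0 \<le> tf T" and lam: "0 \<le> lam" "lam \<le> 1"
    and dom: "\<forall>T\<in>TT. \<not> P T \<longrightarrow> (\<exists>T'\<in>TT. P T' \<and> tf T \<le> tf T')"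
  shows "(\<Sum>T\<in>TT. (if P T then lam else 1) * tf T)
           \<le> ((lam + card TT) / (1 + card TT)) * (\<Sum>T\<in>TT. tf T)"
proof -
  define a where "a = (\<Sum>T\<in>{T\<in>TT. P T}. tf T)"
  define b where "b = (\<Sum>T\<in>{T\<in>TT. \<not> P T}. tf T)"
  define N where "N = real (card TT)"
  have split: "(\<Sum>T\<in>TT. h T) = (\<Sum>T\<in>{T\<in>TT. P T}. h T) + (\<Sum>T\<in>{T\<in>TT. \<not> P T}. h T)"
    for h :: "'t \<Rightarrow> real"
    using sum.Int_Diff[OF fin, of h "Collect P"] by (simp add: Int_def set_diff_eq)
  have a0: "0 \<le> a" unfolding a_def using pos by (intro sum_nonneg) auto
  have each: "tf T \<le> a" if T: "T \<in> TT" "\<not> P T" for T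
  proof -
    obtain T' where T': "T' \<in> TT" "P T'" "tf T \<le> tf T'" using dom T by blast
    have "tf T' \<le> a" unfolding a_def using T' fin pos by (intro member_le_sum) auto
    then show ?thesis using T' by simp
  qed
  have "b \<le> real (card {T\<in>TT. \<not> P T}) * a"
    unfolding b_def using each sum_bounded_above[of "{T\<in>TT. \<not> P T}" tf a] by auto
  also have "\<dots> \<le> N * a"
    unfolding N_def using fin a0 by (intro mult_right_mono) (auto intro: card_mono)
  finally have "(1 - lam) * b \<le> (1 - lam) * (N * a)" using lam by (intro mult_left_mono) auto
  then have "(1 + N) * (lam * a + b) \<le> (lam + N) * (a + b)" by (simp add: algebra_simps)
  then have "lam * a + b \<le> ((lam + N) / (1 + N)) * (a + b)"
    by (simp add: N_def field_simps)
  then show ?thesis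
    unfolding split[of tf] split[of "\<lambda>T. (if P T then lam else 1) * tf T"] a_def b_def N_def
    by (simp add: sum_distrib_left)
qed

section \<open>Observations, their history, and independence\<close>

locale dgf_observations =
  fixes \<mu> :: "'a measure" and f g :: "'a \<Rightarrow> real" and P :: "'w measure"
    and Y :: "nat \<Rightarrow> nat \<Rightarrow> 'w \<Rightarrow> 'a" and sel :: "nat \<Rightarrow> 'w \<Rightarrow> nat set" and M :: nat
  assumes f_meas[measurable]: "f \<in> borel_measurable \<mu>"
    and g_meas[measurable]: "g \<in> borel_measurable \<mu>"
    and prob_P: "prob_space P"
    and indep: "prob_space.indep_vars P (\<lambda>_. \<mu>) (\<lambda>(k, t). Y k t) ({1..M} \<times> UNIV)"
    and sel_cells: "\<forall>n\<ge>1. \<forall>\<omega>\<in>space P. sel n \<omega> \<subseteq> {1..M}"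
    and sel_past: "\<forall>n\<ge>1. \<forall>A. {\<omega> \<in> space P. sel n \<omega> = A} \<in> past_sigma P \<mu> Y M n"
begin

abbreviation "S k n \<omega> \<equiv> cumS (llr f g) Y sel k n \<omega>"

definition obs_events :: "nat \<times> nat \<Rightarrow> 'w set set" where
  "obs_events i = {(\<lambda>(k, t). Y k t) i -` B \<inter> space P | B. B \<in> sets \<mu>}"

definition history_gens :: "nat \<Rightarrow> 'w set set" where
  "history_gens n = {Y k t -` B \<inter> space P | k t B. k \<in> {1..M} \<and> 1 \<le> t \<and> t < Suc n \<and> B \<in> sets \<mu>}"

definition history :: "nat \<Rightarrow> 'w measure" where
  "history n = sigma (space P) (history_gens n)"

lemma Y_measurable:
  assumes "k \<in> {1..M}" shows "Y k t \<in> measurable P \<mu>"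
proof -
  interpret prob_space P by (rule prob_P)
  have "random_variable \<mu> ((\<lambda>(k, t). Y k t) (k, t))"
    using indep assms unfolding indep_vars_def by blast
  then show ?thesis by simp
qed

lemma history_gens_Pow: "history_gens n \<subseteq> Pow (space P)"
  unfolding history_gens_def by auto

lemma space_history[simp]: "space (history n) = space P"
  unfolding history_def using history_gens_Pow by (simp add: space_measure_of)

lemma sets_history: "sets (history n) = past_sigma P \<mu> Y M (Suc n)"
  unfolding history_def past_sigma_def using history_gens_Pow
  by (simp add: sets_measure_of history_gens_def)

lemma subalgebra_history: "subalgebra P (history n)"
  unfolding subalgebra_def
proof
  have "history_gens n \<subseteq> sets P"
    unfolding history_gens_def using Y_measurable by (auto dest: measurable_sets)
  then show "sets (history n) \<subseteq> sets P"
    unfolding history_def using history_gens_Pow by (simp add: sets_measure_of sets.sigma_sets_subset)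
qed simp

lemma Y_measurable_history:
  assumes "k \<in> {1..M}" "1 \<le> t" "t \<le> n"
  shows "Y k t \<in> measurable (history n) \<mu>"
proof (rule measurableI)
  show "Y k t x \<in> space \<mu>" if "x \<in> space (history n)" for x
    using that Y_measurable[OF assms(1)] by (auto dest: measurable_space)
  show "Y k t -` B \<inter> space (history n) \<in> sets (history n)" if "B \<in> sets \<mu>" for B
  proof -
    have "t < Suc n" using assms by simp
    then have "Y k t -` B \<inter> space P \<in> history_gens n"
      unfolding history_gens_def using assms that by blast
    then show ?thesis unfolding history_def using history_gens_Pow by (simp add: sets_measure_of)
  qed
qed

lemma past_sigma_mono: "n \<le> n' \<Longrightarrow> past_sigma P \<mu> Y M n \<subseteq> past_sigma P \<mu> Y M n'"
  unfolding past_sigma_def by (intro sigma_sets_subseteq) fastforce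

lemma sel_eq_history: "1 \<le> t \<Longrightarrow> t \<le> Suc n \<Longrightarrow> {\<omega> \<in> space P. sel t \<omega> = A} \<in> sets (history n)"
  using sel_past past_sigma_mono[of t "Suc n"] unfolding sets_history by auto

lemma sel_mem_history:
  assumes "1 \<le> t" "t \<le> Suc n"
  shows "{\<omega>. k \<in> sel t \<omega>} \<inter> space (history n) \<in> sets (history n)"
proof -
  have "{\<omega>. k \<in> sel t \<omega>} \<inter> space (history n)
      = (\<Union>A\<in>{A. A \<subseteq> {1..M} \<and> k \<in> A}. {\<omega> \<in> space P. sel t \<omega> = A})"
    using sel_cells assms by auto
  also have "\<dots> \<in> sets (history n)"
    using assms by (intro sets.finite_UN sel_eq_history) (auto intro: finite_subset[of _ "Pow {1..M}"])
  finally show ?thesis .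
qed

lemma llr_measurable[measurable]: "llr f g \<in> borel_measurable \<mu>"
  unfolding llr_def by measurable

lemma S_measurable_history: "k \<in> {1..M} \<Longrightarrow> (\<lambda>\<omega>. S k n \<omega>) \<in> borel_measurable (history n)"
  unfolding cumS_def
proof (intro borel_measurable_sum)
  fix t assume "k \<in> {1..M}" "t \<in> {1..n}"
  then have "(\<lambda>\<omega>. if \<omega> \<in> {\<omega>. k \<in> sel t \<omega>} then llr f g (Y k t \<omega>) else 0) \<in> borel_measurable (history n)"
    by (intro measurable_If_set sel_mem_history measurable_compose[OF Y_measurable_history llr_measurable]) auto
  then show "(\<lambda>\<omega>. if k \<in> sel t \<omega> then llr f g (Y k t \<omega>) else 0) \<in> borel_measurable (history n)"
    by simp
qed

lemma obs_events_Int_stable: "Int_stable (obs_events i)"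
  unfolding Int_stable_def obs_events_def
proof (intro ballI)
  fix a b assume "a \<in> {(\<lambda>(k, t). Y k t) i -` B \<inter> space P | B. B \<in> sets \<mu>}"
    "b \<in> {(\<lambda>(k, t). Y k t) i -` B \<inter> space P | B. B \<in> sets \<mu>}"
  then obtain A B where "a = (\<lambda>(k,t). Y k t) i -` A \<inter> space P" "A \<in> sets \<mu>"
      "b = (\<lambda>(k,t). Y k t) i -` B \<inter> space P" "B \<in> sets \<mu>" by blast
  then have "a \<inter> b = (\<lambda>(k,t). Y k t) i -` (A \<inter> B) \<inter> space P" "A \<inter> B \<in> sets \<mu>" by auto
  then show "a \<inter> b \<in> {(\<lambda>(k, t). Y k t) i -` B \<inter> space P | B. B \<in> sets \<mu>}" by blast
qed

lemma history_gens_eq: "history_gens n = (\<Union>i\<in>{1..M} \<times> {1..n}. obs_events i)"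
proof
  show "history_gens n \<subseteq> (\<Union>i\<in>{1..M} \<times> {1..n}. obs_events i)"
  proof
    fix x assume "x \<in> history_gens n"
    then obtain k t B where "k \<in> {1..M}" "t \<in> {1..n}" "B \<in> sets \<mu>" "x = Y k t -` B \<inter> space P"
      unfolding history_gens_def by (force simp: less_Suc_eq_le)
    then show "x \<in> (\<Union>i\<in>{1..M} \<times> {1..n}. obs_events i)" unfolding obs_events_def by force
  qed
  show "(\<Union>i\<in>{1..M} \<times> {1..n}. obs_events i) \<subseteq> history_gens n"
    unfolding history_gens_def obs_events_def by (force simp: Suc_le_eq)
qed

lemma indep_history_next:
  assumes j: "j \<in> {1..M}"
  shows "prob_space.indep_set P (sigma_sets (space P) (history_gens n))
           (sigma_sets (space P) (obs_events (j, Suc n)))"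
proof -
  interpret prob_space P by (rule prob_P)
  define I where "I b = (if b then {1..M} \<times> {1..n} else {(j, Suc n)})" for b
  have all: "indep_sets obs_events ({1..M} \<times> UNIV)"
    using indep unfolding indep_vars_def2 obs_events_def by blast
  have "(\<Union>b. I b) \<subseteq> {1..M} \<times> UNIV" using j by (auto simp: I_def)
  then have "indep_sets obs_events (\<Union>b. I b)" using all by (rule indep_sets_mono_index)
  then have ind: "indep_sets (\<lambda>b. sigma_sets (space P) (\<Union>i\<in>I b. obs_events i)) UNIV"
    by (rule indep_sets_collect_sigma[OF _ obs_events_Int_stable])
       (auto simp: disjoint_family_on_def I_def)
  have eq: "(\<lambda>b. sigma_sets (space P) (\<Union>i\<in>I b. obs_events i)) =
      case_bool (sigma_sets (space P) (history_gens n)) (sigma_sets (space P) (obs_events (j, Suc n)))"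
  proof -
    have "(\<Union>i\<in>I True. obs_events i) = history_gens n" by (simp add: I_def history_gens_eq)
    moreover have "(\<Union>i\<in>I False. obs_events i) = obs_events (j, Suc n)" by (simp add: I_def)
    ultimately show ?thesis by (intro ext) (simp split: bool.split)
  qed
  show ?thesis using ind unfolding indep_set_def eq .
qed

lemma nn_integral_history_next:
  fixes Z :: "'w \<Rightarrow> ennreal" and h :: "'a \<Rightarrow> ennreal"
  assumes Z: "Z \<in> borel_measurable (history n)" and j: "j \<in> {1..M}" and h: "h \<in> borel_measurable \<mu>"
  shows "(\<integral>\<^sup>+\<omega>. Z \<omega> * h (Y j (Suc n) \<omega>) \<partial>P) = (\<integral>\<^sup>+\<omega>. Z \<omega> \<partial>P) * (\<integral>\<^sup>+\<omega>. h (Y j (Suc n) \<omega>) \<partial>P)"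
proof -
  interpret prob_space P by (rule prob_P)
  define W where "W \<omega> = h (Y j (Suc n) \<omega>)" for \<omega>
  have ZP: "Z \<in> borel_measurable P" by (rule measurable_from_subalg[OF subalgebra_history Z])
  have WP: "W \<in> borel_measurable P" unfolding W_def by (rule measurable_compose[OF Y_measurable[OF j] h])
  have sub_Z: "sigma_sets (space P) {Z -` A \<inter> space P | A. A \<in> sets borel} \<subseteq> sigma_sets (space P) (history_gens n)"
  proof (rule sigma_sets_mono, rule subsetI)
    fix x assume "x \<in> {Z -` A \<inter> space P | A. A \<in> sets borel}"
    then have "x \<in> sets (history n)" using Z by (auto dest: measurable_sets)
    then show "x \<in> sigma_sets (space P) (history_gens n)"
      unfolding history_def using history_gens_Pow by (simp add: sets_measure_of)
  qed
  have sub_W: "sigma_sets (space P) {W -` A \<inter> space P | A. A \<in> sets borel} \<subseteq> sigma_sets (space P) (obs_events (j, Suc n))"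
  proof (rule sigma_sets_subseteq, rule subsetI)
    fix x assume "x \<in> {W -` A \<inter> space P | A. A \<in> sets borel}"
    then obtain A where A: "x = W -` A \<inter> space P" "A \<in> sets borel" by auto
    have "x = Y j (Suc n) -` (h -` A \<inter> space \<mu>) \<inter> space P"
      using A Y_measurable[OF j] unfolding W_def by (auto dest: measurable_space)
    moreover have "h -` A \<inter> space \<mu> \<in> sets \<mu>" using h A by (auto dest: measurable_sets)
    ultimately show "x \<in> obs_events (j, Suc n)" unfolding obs_events_def by (simp only: prod.case) blast
  qed
  have "indep_set (sigma_sets (space P) {Z -` A \<inter> space P | A. A \<in> sets borel})
        (sigma_sets (space P) {W -` A \<inter> space P | A. A \<in> sets borel})"
    using indep_history_next[OF j, of n] unfolding indep_set_def
    by (rule indep_sets_mono_sets) (use sub_Z sub_W in \<open>auto split: bool.split\<close>)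
  then have "indep_var borel Z borel W"
    by (subst indep_var_eq) (intro conjI ZP WP)
  moreover have "case_bool borel borel = (\<lambda>_. borel :: ennreal measure)"
    by (rule ext) (simp split: bool.split)
  ultimately have "indep_vars (\<lambda>_. borel) (case_bool Z W) UNIV"
    unfolding indep_var_def by simp
  from indep_vars_nn_integral[OF _ this]
  show ?thesis unfolding W_def by (simp add: UNIV_bool mult.commute)
qed

end

lemma ennreal_average_le:
  fixes x :: "'i \<Rightarrow> ennreal"
  assumes "finite J" "J \<noteq> {}" "\<forall>i\<in>J. x i \<le> c"
  shows "(\<Sum>i\<in>J. ennreal (1 / real (card J)) * x i) \<le> c"
proof -
  have r: "0 < real (card J)" using assms by (simp add: card_gt_0_iff)
  have "(\<Sum>i\<in>J. ennreal (1 / real (card J)) * x i) \<le> (\<Sum>i\<in>J. ennreal (1 / real (card J)) * c)"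
    using assms by (intro sum_mono mult_left_mono) auto
  also have "\<dots> = (ennreal (real (card J)) * ennreal (1 / real (card J))) * c"
    by (simp add: ennreal_of_nat_eq_real_of_nat mult.assoc)
  also have "ennreal (real (card J)) * ennreal (1 / real (card J)) = 1"
    using r by (simp flip: ennreal_mult)
  finally show ?thesis by simp
qed

section \<open>The potential and its one-step contraction\<close>

locale dgf_potential = dgf_observations \<mu> f g P Y sel M
  for \<mu> :: "'a measure" and f g and P :: "'w measure" and Y sel M +
  fixes m K :: nat and a0 b0 \<theta> lam :: real
  assumes m_cell: "m \<in> {1..M}" and K_pos: "1 \<le> K"
    and rule: "\<forall>n\<ge>1. \<forall>\<omega>\<in>space P. dgf_rule M K a0 b0 (\<lambda>k. S k (n - 1) \<omega>) (sel n \<omega>)"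
    and distr_Y: "\<forall>k\<in>{1..M}. \<forall>t. distr P \<mu> (Y k t) = density \<mu> (\<lambda>x. ennreal (if k = m then g x else f x))"
    and \<theta>_pos: "\<theta> > 0" and lam: "0 \<le> lam" "lam \<le> 1"
    and mgf_f: "\<forall>s. \<theta> \<le> s \<and> s \<le> real M * real M * \<theta> \<longrightarrow>
       (\<integral>\<^sup>+x. ennreal (exp (s * llr f g x)) \<partial>density \<mu> (\<lambda>x. ennreal (f x))) \<le> ennreal lam"
    and mgf_g: "\<forall>s. \<theta> \<le> s \<and> s \<le> real M * real M * \<theta> \<longrightarrow>
       (\<integral>\<^sup>+x. ennreal (exp (s * - llr f g x)) \<partial>density \<mu> (\<lambda>x. ennreal (g x))) \<le> ennreal lam"
begin

lemma mgf_obs: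
  assumes i: "i \<in> {1..M}" and s: "\<theta> \<le> s" "s \<le> real M * real M * \<theta>"
  shows "i \<noteq> m \<Longrightarrow> (\<integral>\<^sup>+\<omega>. ennreal (exp (s * llr f g (Y i t \<omega>))) \<partial>P) \<le> ennreal lam"
    and "i = m \<Longrightarrow> (\<integral>\<^sup>+\<omega>. ennreal (exp (s * - llr f g (Y i t \<omega>))) \<partial>P) \<le> ennreal lam"
proof -
  have transport: "(\<integral>\<^sup>+\<omega>. h (Y i t \<omega>) \<partial>P) = (\<integral>\<^sup>+y. h y \<partial>density \<mu> (\<lambda>x. ennreal (if i = m then g x else f x)))"
    if [measurable]: "h \<in> borel_measurable \<mu>" for h
    using nn_integral_distr[of "Y i t" P \<mu> h] Y_measurable[OF i] distr_Y i by simp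
  show "i \<noteq> m \<Longrightarrow> (\<integral>\<^sup>+\<omega>. ennreal (exp (s * llr f g (Y i t \<omega>))) \<partial>P) \<le> ennreal lam"
    using mgf_f s by (subst transport) auto
  show "i = m \<Longrightarrow> (\<integral>\<^sup>+\<omega>. ennreal (exp (s * - llr f g (Y i t \<omega>))) \<partial>P) \<le> ennreal lam"
    using mgf_g s by (subst transport) auto
qed

definition rivals :: "nat set set" where
  "rivals = {T. T \<subseteq> {1..M} - {m} \<and> T \<noteq> {}}"

lemma rival_props: "T \<in> rivals \<Longrightarrow> T \<subseteq> {1..M} \<and> m \<notin> T \<and> finite T \<and> 1 \<le> card T \<and> card T \<le> M"
  unfolding rivals_def using finite_subset[of T "{1..M}"] card_mono[of "{1..M}" T]
  by (auto simp: Suc_le_eq card_gt_0_iff)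

lemma finite_rivals: "finite rivals"
  by (rule finite_subset[of _ "Pow {1..M}"]) (auto simp: rivals_def)

definition lead :: "nat set \<Rightarrow> nat \<Rightarrow> 'w \<Rightarrow> real" where
  "lead T n \<omega> = exp (\<theta> * (\<Sum>j\<in>T. S j n \<omega> - S m n \<omega>))"

definition potential :: "nat \<Rightarrow> 'w \<Rightarrow> real" where
  "potential n \<omega> = (\<Sum>T\<in>rivals. lead T n \<omega>)"

definition rho :: real where
  "rho = (lam + real (card rivals)) / (1 + real (card rivals))"

text \<open>The cells whose observation changes \<open>lead T\<close> when \<open>A\<close> is selected; the contribution
  of the observation \<open>y\<close> of cell \<open>i\<close> to the exponent of \<open>lead T\<close>; and the factor by which
  \<open>lead T\<close> grows when \<open>A\<close> is selected at time \<open>n + 1\<close>.\<close>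
definition observed :: "nat set \<Rightarrow> nat set \<Rightarrow> nat set" where
  "observed T A = insert m T \<inter> A"

definition increment :: "nat set \<Rightarrow> nat \<Rightarrow> 'a \<Rightarrow> real" where
  "increment T i y = (if i = m then - (\<theta> * real (card T)) * llr f g y else \<theta> * llr f g y)"

definition growth :: "nat set \<Rightarrow> nat set \<Rightarrow> nat \<Rightarrow> 'w \<Rightarrow> real" where
  "growth T A n \<omega> = exp (\<Sum>i\<in>observed T A. increment T i (Y i (Suc n) \<omega>))"

definition lead_on :: "nat set \<Rightarrow> nat set \<Rightarrow> nat \<Rightarrow> 'w \<Rightarrow> ennreal" where
  "lead_on T A n \<omega> = (if sel (Suc n) \<omega> = A then ennreal (lead T n \<omega>) else 0)"

definition damping :: "nat set \<Rightarrow> nat set \<Rightarrow> real" where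
  "damping T A = (if observed T A \<noteq> {} then lam else 1)"

lemma observed_props:
  assumes "T \<in> rivals"
  shows "observed T A \<subseteq> {1..M}" "finite (observed T A)" "card (observed T A) \<le> M"
proof -
  show sub: "observed T A \<subseteq> {1..M}" using rival_props[OF assms] m_cell by (auto simp: observed_def)
  then show "finite (observed T A)" by (rule finite_subset) simp
  show "card (observed T A) \<le> M" using card_mono[OF _ sub] by simp
qed

lemma lead_measurable_history:
  assumes "T \<subseteq> {1..M}" shows "(\<lambda>\<omega>. lead T n \<omega>) \<in> borel_measurable (history n)"
proof -
  have [measurable]: "(\<lambda>\<omega>. \<Sum>j\<in>T. S j n \<omega> - S m n \<omega>) \<in> borel_measurable (history n)"
    using assms m_cell by (intro borel_measurable_sum borel_measurable_diff S_measurable_history) auto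
  show ?thesis unfolding lead_def by measurable
qed

lemma lead_on_measurable_history:
  assumes "T \<subseteq> {1..M}" shows "lead_on T A n \<in> borel_measurable (history n)"
proof -
  have "{\<omega>. sel (Suc n) \<omega> = A} \<inter> space (history n) = {\<omega> \<in> space P. sel (Suc n) \<omega> = A}" by auto
  then have "{\<omega>. sel (Suc n) \<omega> = A} \<inter> space (history n) \<in> sets (history n)"
    using sel_eq_history[of "Suc n" n A] by simp
  then have "(\<lambda>\<omega>. if \<omega> \<in> {\<omega>. sel (Suc n) \<omega> = A} then ennreal (lead T n \<omega>) else 0) \<in> borel_measurable (history n)"
    using lead_measurable_history[OF assms] by (intro measurable_If_set) auto
  then show ?thesis unfolding lead_on_def by simp
qed

lemma lead_measurable: "T \<in> rivals \<Longrightarrow> (\<lambda>\<omega>. lead T n \<omega>) \<in> borel_measurable P"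
  using rival_props by (intro measurable_from_subalg[OF subalgebra_history lead_measurable_history]) auto

lemma lead_on_measurable: "T \<in> rivals \<Longrightarrow> lead_on T A n \<in> borel_measurable P"
  using rival_props by (intro measurable_from_subalg[OF subalgebra_history lead_on_measurable_history]) auto

lemma increment_measurable[measurable]: "increment T i \<in> borel_measurable \<mu>"
  unfolding increment_def by measurable

lemma growth_measurable:
  assumes "T \<in> rivals" shows "(\<lambda>\<omega>. growth T A n \<omega>) \<in> borel_measurable P"
proof -
  have [measurable]: "(\<lambda>\<omega>. \<Sum>i\<in>observed T A. increment T i (Y i (Suc n) \<omega>)) \<in> borel_measurable P"
    using observed_props(1)[OF assms, of A]
    by (intro borel_measurable_sum measurable_compose[OF Y_measurable increment_measurable]) auto
  show ?thesis unfolding growth_def by measurable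
qed

lemma increment_sum:
  assumes "finite T" "m \<notin> T"
  shows "(\<Sum>i\<in>observed T A. increment T i (y i))
       = \<theta> * ((\<Sum>j\<in>T. if j \<in> A then llr f g (y j) else 0)
               - real (card T) * (if m \<in> A then llr f g (y m) else 0))"
proof -
  have restrict: "(\<Sum>j\<in>T. if j \<in> A then llr f g (y j) else 0) = (\<Sum>j\<in>T \<inter> A. llr f g (y j))"
    using assms by (simp add: sum.inter_restrict)
  have on_T: "(\<Sum>i\<in>T \<inter> A. increment T i (y i)) = \<theta> * (\<Sum>j\<in>T \<inter> A. llr f g (y j))"
    using assms unfolding sum_distrib_left by (intro sum.cong) (auto simp: increment_def)
  show ?thesis
  proof (cases "m \<in> A")
    case True
    then have "observed T A = insert m (T \<inter> A)" by (auto simp: observed_def)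
    then show ?thesis using True assms on_T restrict by (simp add: increment_def algebra_simps)
  next
    case False
    then have "observed T A = T \<inter> A" by (auto simp: observed_def)
    then show ?thesis using False on_T restrict by simp
  qed
qed

lemma lead_Suc:
  assumes T: "T \<in> rivals"
  shows "lead T (Suc n) \<omega> = lead T n \<omega> * growth T (sel (Suc n) \<omega>) n \<omega>"
proof -
  have "S k (Suc n) \<omega> = S k n \<omega> + (if k \<in> sel (Suc n) \<omega> then llr f g (Y k (Suc n) \<omega>) else 0)" for k
    unfolding cumS_def by simp
  then have "(\<Sum>j\<in>T. S j (Suc n) \<omega> - S m (Suc n) \<omega>) = (\<Sum>j\<in>T. S j n \<omega> - S m n \<omega>)
     + ((\<Sum>j\<in>T. if j \<in> sel (Suc n) \<omega> then llr f g (Y j (Suc n) \<omega>) else 0)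
     - real (card T) * (if m \<in> sel (Suc n) \<omega> then llr f g (Y m (Suc n) \<omega>) else 0))"
    by (simp add: sum.distrib sum_subtractf algebra_simps)
  then show ?thesis
    using increment_sum[where A="sel (Suc n) \<omega>" and y="\<lambda>i. Y i (Suc n) \<omega>"] rival_props[OF T]
    unfolding lead_def growth_def by (simp add: distrib_left exp_add)
qed

text \<open>Every exponent met in the growth of \<open>lead T\<close>, scaled by a number \<open>r \<le> M\<close> of observed
  cells, lies in the range \<open>[\<theta>, M\<^sup>2\<theta>]\<close> controlled by \<open>lam\<close>.\<close>
lemma increment_mgf:
  assumes T: "T \<in> rivals" and i: "i \<in> insert m T" and r: "1 \<le> r" "r \<le> M"
  shows "(\<integral>\<^sup>+\<omega>. ennreal (exp (real r * increment T i (Y i t \<omega>))) \<partial>P) \<le> ennreal lam"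
proof -
  have T': "1 \<le> card T" "card T \<le> M" "T \<subseteq> {1..M}" using rival_props[OF T] by auto
  have in_range: "\<theta> \<le> x * \<theta> \<and> x * \<theta> \<le> real M * real M * \<theta>" if "1 \<le> x" "x \<le> real M * real M" for x
    using that \<theta>_pos by (auto intro: mult_right_mono)
  show ?thesis
  proof (cases "i = m")
    case True
    have "1 * 1 \<le> real r * real (card T)" "real r * real (card T) \<le> real M * real M"
      using r T' by (intro mult_mono; simp)+
    then have "\<theta> \<le> real r * real (card T) * \<theta> \<and> real r * real (card T) * \<theta> \<le> real M * real M * \<theta>"
      using in_range by simp
    moreover have "(\<lambda>\<omega>. ennreal (exp (real r * increment T i (Y i t \<omega>))))
        = (\<lambda>\<omega>. ennreal (exp ((real r * real (card T) * \<theta>) * - llr f g (Y i t \<omega>))))"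
      using True by (simp add: increment_def mult_ac)
    ultimately show ?thesis using mgf_obs(2)[of i] True m_cell by simp
  next
    case False
    have "real r \<le> real M * real M" using r by (metis le_square of_nat_le_iff of_nat_mult order_trans)
    then have "\<theta> \<le> real r * \<theta> \<and> real r * \<theta> \<le> real M * real M * \<theta>" using in_range r by simp
    moreover have "(\<lambda>\<omega>. ennreal (exp (real r * increment T i (Y i t \<omega>))))
        = (\<lambda>\<omega>. ennreal (exp ((real r * \<theta>) * llr f g (Y i t \<omega>))))"
      using False by (simp add: increment_def mult_ac)
    moreover have "i \<in> {1..M}" using False i T' by auto
    ultimately show ?thesis using mgf_obs(1)[of i] False by simp
  qed
qed

text \<open>A single observed cell, scaled by \<open>r \<le> M\<close>, contributes a factor \<open>lam\<close> to the
  expected lead on the event that \<open>A\<close> is selected next: the observation is independent of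
  that event and of the lead, which are both determined by the history.\<close>
lemma expected_observed_term:
  assumes T: "T \<in> rivals" and i: "i \<in> observed T A" and r: "1 \<le> r" "r \<le> M"
  shows "(\<integral>\<^sup>+\<omega>. lead_on T A n \<omega> * ennreal (exp (real r * increment T i (Y i (Suc n) \<omega>))) \<partial>P)
           \<le> ennreal lam * (\<integral>\<^sup>+\<omega>. lead_on T A n \<omega> \<partial>P)"
proof -
  have iM: "i \<in> {1..M}" using i observed_props(1)[OF T, of A] by auto
  have "(\<integral>\<^sup>+\<omega>. lead_on T A n \<omega> * ennreal (exp (real r * increment T i (Y i (Suc n) \<omega>))) \<partial>P)
      = (\<integral>\<^sup>+\<omega>. lead_on T A n \<omega> \<partial>P) * (\<integral>\<^sup>+\<omega>. ennreal (exp (real r * increment T i (Y i (Suc n) \<omega>))) \<partial>P)"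
    using rival_props[OF T]
    by (intro nn_integral_history_next lead_on_measurable_history iM) simp_all
  also have "\<dots> \<le> (\<integral>\<^sup>+\<omega>. lead_on T A n \<omega> \<partial>P) * ennreal lam"
    using i r T by (intro mult_left_mono increment_mgf) (auto simp: observed_def)
  finally show ?thesis by (simp add: mult.commute)
qed

lemma growth_le_mean:
  assumes T: "T \<in> rivals" and obs: "observed T A \<noteq> {}"
  defines "r \<equiv> card (observed T A)"
  shows "ennreal (growth T A n \<omega>)
           \<le> (\<Sum>i\<in>observed T A. ennreal (1 / real r) * ennreal (exp (real r * increment T i (Y i (Suc n) \<omega>))))"
proof -
  have "growth T A n \<omega> \<le> (\<Sum>i\<in>observed T A. (1 / real r) * exp (real r * increment T i (Y i (Suc n) \<omega>)))"
    unfolding growth_def r_def using observed_props[OF T] obs by (intro exp_sum_le_mean) auto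
  then have "ennreal (growth T A n \<omega>)
      \<le> ennreal (\<Sum>i\<in>observed T A. (1 / real r) * exp (real r * increment T i (Y i (Suc n) \<omega>)))"
    by (rule ennreal_leI)
  also have "\<dots> = (\<Sum>i\<in>observed T A. ennreal ((1 / real r) * exp (real r * increment T i (Y i (Suc n) \<omega>))))"
    by (rule sum_ennreal[symmetric]) simp
  also have "\<dots> = (\<Sum>i\<in>observed T A. ennreal (1 / real r) * ennreal (exp (real r * increment T i (Y i (Suc n) \<omega>))))"
    by (intro sum.cong refl ennreal_mult) auto
  finally show ?thesis .
qed

text \<open>Step (2): on the event that \<open>A\<close> is selected next, the expected growth of \<open>lead T\<close> is at
  most \<open>damping T A\<close>: if nothing relevant is observed the lead does not change, otherwise
  it is an average of terms each contributing the factor \<open>lam\<close>.\<close>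
lemma expected_growth:
  assumes T: "T \<in> rivals"
  shows "(\<integral>\<^sup>+\<omega>. lead_on T A n \<omega> * ennreal (growth T A n \<omega>) \<partial>P)
           \<le> ennreal (damping T A) * (\<integral>\<^sup>+\<omega>. lead_on T A n \<omega> \<partial>P)"
proof (cases "observed T A = {}")
  case True
  then show ?thesis by (auto simp: growth_def damping_def)
next
  case False
  define J where "J = observed T A"
  define r where "r = card J"
  define E where "E i \<omega> = ennreal (exp (real r * increment T i (Y i (Suc n) \<omega>)))" for i \<omega>
  have J: "finite J" "J \<noteq> {}" "J \<subseteq> {1..M}" "r \<le> M"
    using observed_props[OF T] False by (auto simp: J_def r_def)
  have r: "1 \<le> r" using J by (auto simp: r_def Suc_le_eq card_gt_0_iff)
  have E_meas: "(\<lambda>\<omega>. lead_on T A n \<omega> * E i \<omega>) \<in> borel_measurable P" if "i \<in> J" for i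
  proof -
    have "i \<in> {1..M}" using that J(3) by auto
    then have [measurable]: "(\<lambda>\<omega>. increment T i (Y i (Suc n) \<omega>)) \<in> borel_measurable P"
      by (intro measurable_compose[OF Y_measurable increment_measurable])
    have [measurable]: "lead_on T A n \<in> borel_measurable P" by (rule lead_on_measurable[OF T])
    show ?thesis unfolding E_def by measurable
  qed
  have "(\<integral>\<^sup>+\<omega>. lead_on T A n \<omega> * ennreal (growth T A n \<omega>) \<partial>P)
      \<le> (\<integral>\<^sup>+\<omega>. lead_on T A n \<omega> * (\<Sum>i\<in>J. ennreal (1 / real r) * E i \<omega>) \<partial>P)"
    using growth_le_mean[OF T False] unfolding J_def r_def E_def
    by (intro nn_integral_mono mult_left_mono) auto
  also have "\<dots> = (\<integral>\<^sup>+\<omega>. (\<Sum>i\<in>J. ennreal (1 / real r) * (lead_on T A n \<omega> * E i \<omega>)) \<partial>P)"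
    by (intro nn_integral_cong) (simp add: sum_distrib_left mult.left_commute)
  also have "\<dots> = (\<Sum>i\<in>J. ennreal (1 / real r) * (\<integral>\<^sup>+\<omega>. lead_on T A n \<omega> * E i \<omega> \<partial>P))"
    using E_meas by (subst nn_integral_sum) (auto intro!: sum.cong nn_integral_cmult)
  also have "\<dots> \<le> ennreal lam * (\<integral>\<^sup>+\<omega>. lead_on T A n \<omega> \<partial>P)"
    unfolding r_def E_def using J r T expected_observed_term
    by (intro ennreal_average_le) (auto simp: J_def r_def)
  finally show ?thesis using False by (simp add: damping_def)
qed

lemma lead_Suc_split:
  assumes T: "T \<in> rivals" and \<omega>: "\<omega> \<in> space P"
  shows "ennreal (lead T (Suc n) \<omega>) = (\<Sum>A\<in>Pow {1..M}. lead_on T A n \<omega> * ennreal (growth T A n \<omega>))"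
proof -
  have sel: "sel (Suc n) \<omega> \<in> Pow {1..M}" using sel_cells \<omega> by auto
  have "(\<Sum>A\<in>Pow {1..M}. lead_on T A n \<omega> * ennreal (growth T A n \<omega>))
     = (\<Sum>A\<in>Pow {1..M}. if sel (Suc n) \<omega> = A then ennreal (lead T n \<omega>) * ennreal (growth T A n \<omega>) else 0)"
    unfolding lead_on_def by (intro sum.cong) auto
  also have "\<dots> = ennreal (lead T n \<omega>) * ennreal (growth T (sel (Suc n) \<omega>) n \<omega>)"
    using sel by simp
  also have "\<dots> = ennreal (lead T (Suc n) \<omega>)"
    unfolding lead_Suc[OF T] by (simp add: ennreal_mult lead_def growth_def)
  finally show ?thesis by simp
qed

lemma damping_split:
  assumes \<omega>: "\<omega> \<in> space P"
  shows "(\<Sum>A\<in>Pow {1..M}. ennreal (damping T A) * lead_on T A n \<omega>)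
           = ennreal (damping T (sel (Suc n) \<omega>) * lead T n \<omega>)"
proof -
  have "sel (Suc n) \<omega> \<in> Pow {1..M}" using sel_cells \<omega> by auto
  then have "(\<Sum>A\<in>Pow {1..M}. ennreal (damping T A) * lead_on T A n \<omega>)
      = ennreal (damping T (sel (Suc n) \<omega>)) * ennreal (lead T n \<omega>)"
    unfolding lead_on_def by (simp add: if_distrib cong: if_cong)
  also have "\<dots> = ennreal (damping T (sel (Suc n) \<omega>) * lead T n \<omega>)"
    using lam by (simp add: ennreal_mult damping_def lead_def)
  finally show ?thesis .
qed

text \<open>Step (3): by the combinatorics of the DGF rule, the damped leads sum to at most
  \<open>\<rho>\<close> times the potential, whatever set is selected.\<close>
lemma damped_leads_le:
  assumes \<omega>: "\<omega> \<in> space P"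
  shows "(\<Sum>T\<in>rivals. damping T (sel (Suc n) \<omega>) * lead T n \<omega>) \<le> rho * potential n \<omega>"
proof -
  define A where "A = sel (Suc n) \<omega>"
  have R: "dgf_rule M K a0 b0 (\<lambda>k. S k n \<omega>) A"
    using rule \<omega> unfolding A_def by (metis diff_Suc_1 le_add1 plus_1_eq_Suc)
  have dominated: "\<exists>T'\<in>rivals. observed T' A \<noteq> {} \<and> lead T n \<omega> \<le> lead T' n \<omega>"
    if T: "T \<in> rivals" and unobserved: "observed T A = {}" for T
  proof -
    have "T \<subseteq> {1..M} - {m}" "T \<noteq> {}" "T \<inter> A = {}" "m \<notin> A"
      using T unobserved unfolding rivals_def observed_def by auto
    from dgf_rule_dominates[OF R K_pos m_cell this(4) this(1-3)]
    obtain T' where T': "T' \<subseteq> {1..M} - {m}" "T' \<noteq> {}" "T' \<inter> A \<noteq> {}"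
        "(\<Sum>j\<in>T. S j n \<omega> - S m n \<omega>) \<le> (\<Sum>j\<in>T'. S j n \<omega> - S m n \<omega>)"
      by blast
    have "T' \<in> rivals" using T' by (simp add: rivals_def)
    moreover have "lead T n \<omega> \<le> lead T' n \<omega>"
      unfolding lead_def using T'(4) \<theta>_pos by simp
    moreover have "observed T' A \<noteq> {}" using T'(3) by (auto simp: observed_def)
    ultimately show ?thesis by blast
  qed
  have "(\<Sum>T\<in>rivals. (if observed T A \<noteq> {} then lam else 1) * lead T n \<omega>)
      \<le> ((lam + card rivals) / (1 + card rivals)) * (\<Sum>T\<in>rivals. lead T n \<omega>)"
    using dominated by (intro damped_sum_le[OF finite_rivals _ lam]) (auto simp: lead_def)
  then show ?thesis unfolding A_def potential_def rho_def damping_def by simp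
qed

lemma potential_measurable: "(\<lambda>\<omega>. potential n \<omega>) \<in> borel_measurable P"
  unfolding potential_def using lead_measurable by (intro borel_measurable_sum) auto

lemma expected_potential_step:
  "(\<integral>\<^sup>+\<omega>. ennreal (potential (Suc n) \<omega>) \<partial>P) \<le> ennreal rho * (\<integral>\<^sup>+\<omega>. ennreal (potential n \<omega>) \<partial>P)"
proof -
  have lead_nonneg: "0 \<le> lead T k \<omega>" for T k \<omega> by (simp add: lead_def)
  have meas: "(\<lambda>\<omega>. lead_on T A n \<omega> * ennreal (growth T A n \<omega>)) \<in> borel_measurable P"
    "lead_on T A n \<in> borel_measurable P" if "T \<in> rivals" for T A
    using lead_on_measurable[OF that] growth_measurable[OF that] by auto
  have "(\<integral>\<^sup>+\<omega>. ennreal (potential (Suc n) \<omega>) \<partial>P)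
      = (\<integral>\<^sup>+\<omega>. (\<Sum>T\<in>rivals. \<Sum>A\<in>Pow {1..M}. lead_on T A n \<omega> * ennreal (growth T A n \<omega>)) \<partial>P)"
  proof (rule nn_integral_cong)
    fix \<omega> assume \<omega>: "\<omega> \<in> space P"
    have "ennreal (potential (Suc n) \<omega>) = (\<Sum>T\<in>rivals. ennreal (lead T (Suc n) \<omega>))"
      unfolding potential_def using lead_nonneg by (rule sum_ennreal[symmetric])
    also have "\<dots> = (\<Sum>T\<in>rivals. \<Sum>A\<in>Pow {1..M}. lead_on T A n \<omega> * ennreal (growth T A n \<omega>))"
      using lead_Suc_split \<omega> by (intro sum.cong) auto
    finally show "ennreal (potential (Suc n) \<omega>)
        = (\<Sum>T\<in>rivals. \<Sum>A\<in>Pow {1..M}. lead_on T A n \<omega> * ennreal (growth T A n \<omega>))" .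
  qed
  also have "\<dots> = (\<Sum>T\<in>rivals. \<Sum>A\<in>Pow {1..M}. (\<integral>\<^sup>+\<omega>. lead_on T A n \<omega> * ennreal (growth T A n \<omega>) \<partial>P))"
    using meas by (simp add: nn_integral_sum borel_measurable_sum)
  also have "\<dots> \<le> (\<Sum>T\<in>rivals. \<Sum>A\<in>Pow {1..M}. ennreal (damping T A) * (\<integral>\<^sup>+\<omega>. lead_on T A n \<omega> \<partial>P))"
    by (intro sum_mono expected_growth)
  also have "\<dots> = (\<integral>\<^sup>+\<omega>. (\<Sum>T\<in>rivals. \<Sum>A\<in>Pow {1..M}. ennreal (damping T A) * lead_on T A n \<omega>) \<partial>P)"
    using meas by (simp add: nn_integral_sum borel_measurable_sum nn_integral_cmult)
  also have "\<dots> = (\<integral>\<^sup>+\<omega>. ennreal (\<Sum>T\<in>rivals. damping T (sel (Suc n) \<omega>) * lead T n \<omega>) \<partial>P)"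
  proof (rule nn_integral_cong)
    fix \<omega> assume \<omega>: "\<omega> \<in> space P"
    have "(\<Sum>T\<in>rivals. \<Sum>A\<in>Pow {1..M}. ennreal (damping T A) * lead_on T A n \<omega>)
        = (\<Sum>T\<in>rivals. ennreal (damping T (sel (Suc n) \<omega>) * lead T n \<omega>))"
      using damping_split[OF \<omega>] by simp
    also have "\<dots> = ennreal (\<Sum>T\<in>rivals. damping T (sel (Suc n) \<omega>) * lead T n \<omega>)"
      using lam lead_nonneg by (intro sum_ennreal) (simp add: damping_def)
    finally show "(\<Sum>T\<in>rivals. \<Sum>A\<in>Pow {1..M}. ennreal (damping T A) * lead_on T A n \<omega>)
        = ennreal (\<Sum>T\<in>rivals. damping T (sel (Suc n) \<omega>) * lead T n \<omega>)" .
  qed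
  also have "\<dots> \<le> (\<integral>\<^sup>+\<omega>. ennreal (rho * potential n \<omega>) \<partial>P)"
    by (intro nn_integral_mono ennreal_leI damped_leads_le)
  also have "\<dots> = (\<integral>\<^sup>+\<omega>. ennreal rho * ennreal (potential n \<omega>) \<partial>P)"
    using lam lead_nonneg
    by (intro nn_integral_cong ennreal_mult) (auto simp: rho_def potential_def intro: sum_nonneg)
  also have "\<dots> = ennreal rho * (\<integral>\<^sup>+\<omega>. ennreal (potential n \<omega>) \<partial>P)"
    using potential_measurable by (simp add: nn_integral_cmult)
  finally show ?thesis .
qed

text \<open>Iterating from \<open>\<Phi>(0) = N\<close>: \<open>E \<Phi>(n) \<le> \<rho>\<^sup>n N\<close>.\<close>
lemma expected_potential_bound:
  "(\<integral>\<^sup>+\<omega>. ennreal (potential n \<omega>) \<partial>P) \<le> ennreal (rho ^ n * real (card rivals))"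
proof (induction n)
  case 0
  interpret prob_space P by (rule prob_P)
  have "potential 0 \<omega> = real (card rivals)" for \<omega>
    unfolding potential_def lead_def cumS_def by simp
  then show ?case by (simp add: emeasure_space_1)
next
  case (Suc n)
  have "0 \<le> rho" using lam by (simp add: rho_def)
  have "(\<integral>\<^sup>+\<omega>. ennreal (potential (Suc n) \<omega>) \<partial>P) \<le> ennreal rho * (\<integral>\<^sup>+\<omega>. ennreal (potential n \<omega>) \<partial>P)"
    by (rule expected_potential_step)
  also have "\<dots> \<le> ennreal rho * ennreal (rho ^ n * real (card rivals))"
    using Suc by (rule mult_left_mono) simp
  also have "\<dots> = ennreal (rho ^ Suc n * real (card rivals))"
    using \<open>0 \<le> rho\<close> by (simp add: ennreal_mult'[symmetric] mult.assoc)
  finally show ?case .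
qed

section \<open>From the potential to the tail of \<open>\<tau>\<^sub>1\<close>\<close>

text \<open>The alarm at time \<open>n\<close>: the potential reaches 1.  By Markov's inequality its
  probability is at most \<open>\<rho>\<^sup>n N\<close>.\<close>
definition alarm :: "nat \<Rightarrow> 'w set" where
  "alarm n = {\<omega> \<in> space P. 1 \<le> potential n \<omega>}"

lemma alarm_sets: "alarm n \<in> sets P"
  unfolding alarm_def using potential_measurable by measurable

lemma alarm_measure: "measure P (alarm n) \<le> rho ^ n * real (card rivals)"
proof -
  interpret prob_space P by (rule prob_P)
  have "emeasure P (alarm n) = (\<integral>\<^sup>+\<omega>. indicator (alarm n) \<omega> \<partial>P)"
    using alarm_sets by simp
  also have "\<dots> \<le> (\<integral>\<^sup>+\<omega>. ennreal (potential n \<omega>) \<partial>P)"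
    by (intro nn_integral_mono) (auto simp: alarm_def indicator_def)
  also have "\<dots> \<le> ennreal (rho ^ n * real (card rivals))" by (rule expected_potential_bound)
  finally have "ennreal (measure P (alarm n)) \<le> ennreal (rho ^ n * real (card rivals))"
    by (simp add: emeasure_eq_measure)
  moreover have "0 \<le> rho ^ n * real (card rivals)" using lam by (simp add: rho_def)
  ultimately show ?thesis by (simp add: ennreal_le_iff)
qed

text \<open>If \<open>\<tau>\<^sub>1 > n\<close>, then at some time \<open>n' \<ge> n\<close> some cell \<open>j \<noteq> m\<close> is not behind \<open>m\<close>,
  so the lead of the rival set \<open>{j}\<close>, and hence the potential, is at least 1.\<close>
lemma late_lead_alarm:
  assumes \<omega>: "\<omega> \<in> space P" and late: "tau1 M m (\<lambda>k n. S k n \<omega>) > enat n"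
  shows "\<exists>i. \<omega> \<in> alarm (n + i)"
proof -
  define Q where "Q t = (\<forall>n'\<ge>t. \<forall>j\<in>{1..M} - {m}. S j n' \<omega> < S m n' \<omega>)" for t
  have "\<not> Q n"
  proof
    assume "Q n"
    then have "tau1 M m (\<lambda>k n. S k n \<omega>) = enat (LEAST t. Q t)" "(LEAST t. Q t) \<le> n"
      unfolding tau1_def Q_def by (auto intro: Least_le)
    then show False using late by simp
  qed
  then obtain n' j where nj: "n' \<ge> n" "j \<in> {1..M} - {m}" "\<not> S j n' \<omega> < S m n' \<omega>"
    unfolding Q_def by blast
  have j: "{j} \<in> rivals" using nj unfolding rivals_def by auto
  have "1 \<le> lead {j} n' \<omega>" unfolding lead_def using nj \<theta>_pos by simp
  also have "lead {j} n' \<omega> \<le> potential n' \<omega>"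
    unfolding potential_def using j finite_rivals by (intro member_le_sum) (auto simp: lead_def)
  finally have "\<omega> \<in> alarm (n + (n' - n))" using \<omega> nj by (simp add: alarm_def)
  then show ?thesis by blast
qed

lemma card_rivals_pos: "2 \<le> M \<Longrightarrow> 1 \<le> card rivals"
proof -
  assume M: "2 \<le> M"
  define j :: nat where "j = (if m = 1 then 2 else 1)"
  have "{j} \<in> rivals" using M m_cell unfolding rivals_def j_def by auto
  then show ?thesis using finite_rivals by (metis One_nat_def Suc_leI card_gt_0_iff empty_iff)
qed

text \<open>Step (4): a union bound over the alarms at times \<open>n, n + 1, \<dots>\<close> gives the geometric
  tail \<open>P(\<tau>\<^sub>1 > n) \<le> N \<rho>\<^sup>n / (1 - \<rho>)\<close>.\<close>
lemma tau1_tail_bound: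
  assumes M: "2 \<le> M" and lam1: "lam < 1"
  shows "\<exists>C>0. \<exists>\<gamma>>0. \<forall>n\<ge>1.
           measure P {\<omega> \<in> space P. tau1 M m (\<lambda>k n. S k n \<omega>) > enat n} \<le> C * exp (- \<gamma> * real n)"
proof -
  interpret prob_space P by (rule prob_P)
  define N where "N = real (card rivals)"
  have N1: "1 \<le> N" using card_rivals_pos[OF M] by (simp add: N_def)
  have rho: "0 < rho" "rho < 1" using lam lam1 N1 by (auto simp: rho_def N_def field_simps)
  define C where "C = N / (1 - rho)"
  define \<gamma> where "\<gamma> = - ln rho"
  have C0: "C > 0" and \<gamma>0: "\<gamma> > 0" using N1 rho by (auto simp: C_def \<gamma>_def)
  have "measure P {\<omega> \<in> space P. tau1 M m (\<lambda>k n. S k n \<omega>) > enat n} \<le> C * exp (- \<gamma> * real n)" for n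
  proof -
    define B where "B i = alarm (n + i)" for i
    have B_sets: "range B \<subseteq> sets P" using alarm_sets by (auto simp: B_def)
    have geom: "(\<lambda>i. N * rho ^ n * rho ^ i) sums (N * rho ^ n * (1 / (1 - rho)))"
      using rho by (intro sums_mult geometric_sums) auto
    have B_le: "measure P (B i) \<le> N * rho ^ n * rho ^ i" for i
      using alarm_measure[of "n + i"] by (simp add: B_def N_def power_add ac_simps)
    have B_summable: "summable (\<lambda>i. measure P (B i))"
      by (rule summable_comparison_test[OF _ sums_summable[OF geom]]) (use B_le in auto)
    have "{\<omega> \<in> space P. tau1 M m (\<lambda>k n. S k n \<omega>) > enat n} \<subseteq> (\<Union>i. B i)"
      using late_lead_alarm unfolding B_def by blast
    then have "measure P {\<omega> \<in> space P. tau1 M m (\<lambda>k n. S k n \<omega>) > enat n} \<le> measure P (\<Union>i. B i)"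
      using B_sets by (intro finite_measure_mono) auto
    also have "\<dots> \<le> (\<Sum>i. measure P (B i))"
      by (rule finite_measure_subadditive_countably[OF B_sets B_summable])
    also have "\<dots> \<le> N * rho ^ n * (1 / (1 - rho))"
      using suminf_le[OF B_le B_summable sums_summable[OF geom]] sums_unique[OF geom] by simp
    also have "\<dots> = C * exp (- \<gamma> * real n)"
    proof -
      have "rho ^ n = exp (real n * ln rho)" using rho by (simp add: exp_of_nat_mult)
      then show ?thesis by (simp add: C_def \<gamma>_def)
    qed
    finally show ?thesis .
  qed
  then show ?thesis using C0 \<gamma>0 by blast
qed

end

theorem lemma7:
  fixes \<mu> :: "'a measure" and f g :: "'a \<Rightarrow> real"
    and P :: "'w measure" and Y :: "nat \<Rightarrow> nat \<Rightarrow> 'w \<Rightarrow> 'a"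
    and sel :: "nat \<Rightarrow> 'w \<Rightarrow> nat set" and M K m :: nat
  assumes "2 \<le> M" and "1 \<le> K" and "K \<le> M" and "m \<in> {1..M}"
    and "f \<in> borel_measurable \<mu>" and "g \<in> borel_measurable \<mu>"
    and "\<forall>x\<in>space \<mu>. 0 \<le> f x" and "\<forall>x\<in>space \<mu>. 0 \<le> g x"
    and "prob_space (density \<mu> (\<lambda>x. ennreal (f x)))"
    and "prob_space (density \<mu> (\<lambda>x. ennreal (g x)))"
    and "AE x in \<mu>. (f x = 0 \<longleftrightarrow> g x = 0)"
    and "integrable \<mu> (\<lambda>x. g x * ln (g x / f x))"
    and "integrable \<mu> (\<lambda>x. f x * ln (f x / g x))"
    and "0 < KL \<mu> g f" and "0 < KL \<mu> f g"
    and "\<exists>\<delta>>0. \<forall>t::real. \<bar>t\<bar> < \<delta> \<longrightarrow>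
           integrable (density \<mu> (\<lambda>x. ennreal (f x))) (\<lambda>y. exp (t * llr f g y)) \<and>
           integrable (density \<mu> (\<lambda>x. ennreal (g x))) (\<lambda>y. exp (t * llr f g y))"
    and "prob_space P"
    and "prob_space.indep_vars P (\<lambda>_. \<mu>) (\<lambda>(k, t). Y k t) ({1..M} \<times> UNIV)"
    and "\<forall>k\<in>{1..M}. \<forall>t. distr P \<mu> (Y k t) = density \<mu> (\<lambda>x. ennreal (if k = m then g x else f x))"
    and "\<forall>n\<ge>1. \<forall>\<omega>\<in>space P.
           dgf_rule M K (KL \<mu> g f) (KL \<mu> f g) (\<lambda>k. cumS (llr f g) Y sel k (n - 1) \<omega>) (sel n \<omega>)"
    and "\<forall>n\<ge>1. \<forall>A. {\<omega> \<in> space P. sel n \<omega> = A} \<in> past_sigma P \<mu> Y M n"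
  shows "\<exists>C>0. \<exists>\<gamma>>0. \<forall>n\<ge>1.
           measure P {\<omega> \<in> space P. tau1 M m (\<lambda>k n. cumS (llr f g) Y sel k n \<omega>) > enat n}
             \<le> C * exp (- \<gamma> * real n)"
proof -
  have "1 \<le> real M * real M" using assms(1) mult_mono[of 1 "real M" 1 "real M"] by simp
  then obtain \<theta> lam where \<theta>: "\<theta> > 0" and lam_bounds: "0 \<le> lam" "lam < 1"
    and mgf: "\<forall>s. \<theta> \<le> s \<and> s \<le> real M * real M * \<theta> \<longrightarrow>
           (\<integral>\<^sup>+x. ennreal (exp (s * llr f g x)) \<partial>density \<mu> (\<lambda>x. ennreal (f x))) \<le> ennreal lam \<and>
           (\<integral>\<^sup>+x. ennreal (exp (s * - llr f g x)) \<partial>density \<mu> (\<lambda>x. ennreal (g x))) \<le> ennreal lam"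
    using llr_common_contraction[OF assms(5-10) assms(12-16)] by blast
  have sel_cells: "\<forall>n\<ge>1. \<forall>\<omega>\<in>space P. sel n \<omega> \<subseteq> {1..M}"
    using assms(20) dgf_rule_subset by blast
  interpret dgf_potential \<mu> f g P Y sel M m K "KL \<mu> g f" "KL \<mu> f g" \<theta> lam
    by (intro dgf_potential.intro dgf_observations.intro dgf_potential_axioms.intro
          assms(2,4,5,6,17-21) sel_cells \<theta> lam_bounds(1) less_imp_le[OF lam_bounds(2)])
       (use mgf in blast)+
  show ?thesis by (rule tau1_tail_bound[OF assms(1) lam_bounds(2)])
qed

end
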